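(* Let $K=K_1K_2=d\,m\,K_2$ with $K_1,K_2,d,m\in\mathbb{N}^+$, and let $\Sigma$ be a $d\times d$ covariance matrix. Let $X_1,\dots,X_K$ be random variables such that the blocks $(X_{(j-1)d+1},\dots,X_{jd})$, $j=1,\dots,mK_2$, are i.i.d. $N(0,\Sigma)$. Define $Y_i=\sum_{j=1}^{K_1}X_{j+(i-1)K_1}$ for $i=1,\dots,K_2$. Then $$\mathbb{E}\left[\frac{1}{\log K_1}\left(\frac{1}{K_2}\sum_{i=1}^{K_2}\log|Y_i|-\frac1K\sum_{i=1}^K\log|X_i|\right)\right]=\frac12\cdot\frac{\log m+\log\mathbf{1}^\top\Sigma\mathbf{1}-\frac1d\sum_{i=1}^d\log\Sigma_{ii}}{\log m+\log d}.$$ In particular, when $d=K_1\ge2$, $m=1$ and $\Sigma=\beta\mathbf{1}\mathbf{1}^\top+(1-\beta)I$ with $\beta\in[0,1]$, this expectation equals $\frac12\frac{\log(\beta d^2+(1-\beta)d)}{\log d}$, and $$\Big\{\tfrac12\tfrac{\log(\beta d^2+(1-\beta)d)}{\log d}:\beta\in[0,1]\Big\}=\Big[\tfrac12,1\Big].$$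
   Context: $\mathbf{1}\in\mathbb{R}^d$ is the all-ones vector and $I$ the $d\times d$ identity. *)

theory Defs
  imports "HOL-Probability.Probability"
begin

definition covariance_matrix :: "nat \<Rightarrow> (nat \<Rightarrow> nat \<Rightarrow> real) \<Rightarrow> bool" where
  "covariance_matrix d \<Sigma> \<longleftrightarrow>
     (\<forall>i\<in>{1..d}. \<forall>k\<in>{1..d}. \<Sigma> i k = \<Sigma> k i) \<and>
     (\<forall>v :: nat \<Rightarrow> real. (\<Sum>i=1..d. \<Sum>k=1..d. v i * \<Sigma> i k * v k) \<ge> 0)"

text \<open>The random vector (V 1, ..., V d) on M is distributed as N(0, Sigma)
  (general, possibly degenerate, multivariate normal law, defined via its
  characteristic function).\<close>
definition centered_gaussian_vector ::
  "'a measure \<Rightarrow> nat \<Rightarrow> (nat \<Rightarrow> 'a \<Rightarrow> real) \<Rightarrow> (nat \<Rightarrow> nat \<Rightarrow> real) \<Rightarrow> bool" where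
  "centered_gaussian_vector M d V \<Sigma> \<longleftrightarrow>
     (\<forall>i\<in>{1..d}. V i \<in> borel_measurable M) \<and>
     (\<forall>t :: nat \<Rightarrow> real.
        (\<integral>\<omega>. cis (\<Sum>i=1..d. t i * V i \<omega>) \<partial>M)
          = complex_of_real (exp (- (1/2) * (\<Sum>i=1..d. \<Sum>k=1..d. t i * \<Sigma> i k * t k))))"

end

theory Submission
  imports Defs
begin

(* If Z is centered normal with variance v > 0, then E ln|Z| = (ln v)/2 + E ln|N(0,1)|, where the
   last expectation is finite because |ln|x|| is at most 2|x|^(-1/2) near 0 and at most |x| away
   from 0. Each X_i is N(0, Sigma_ii), and each Y_i is the sum of m independent block sums, each
   N(0, 1^T Sigma 1), hence Y_i is N(0, m 1^T Sigma 1); all these laws are identified from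
   characteristic functions by Levy's uniqueness theorem. In the difference of the two averages the
   constant E ln|N(0,1)| cancels. For the equicorrelated matrix, beta d^2 + (1 - beta) d increases
   from d to d^2 as beta runs through [0,1], so the exponent fills [1/2, 1]. *)

lemma neg_ln_le_two_powr:
  assumes "0 < (y::real)"
  shows "- ln y \<le> 2 * y powr (-1/2)"
proof -
  have "1 + (-(1/2) * ln y) \<le> exp (-(1/2) * ln y)"
    by (rule exp_ge_add_one_self)
  also have "exp (-(1/2) * ln y) = y powr (-1/2)"
    using assms by (simp add: powr_def)
  finally show ?thesis by simp
qed

lemma std_normal_density_le_1: "std_normal_density x \<le> 1"
proof -
  have "1 \<le> sqrt (2 * pi)"
    using pi_gt3 by (simp add: real_le_rsqrt)
  then show ?thesis
    by (simp add: std_normal_density_def divide_le_eq_1 order_trans[OF _ \<open>1 \<le> sqrt (2 * pi)\<close>])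
qed

lemma integrable_powr_neg_half_unit_interval:
  "integrable lborel (\<lambda>x::real. indicator {0..1} x * x powr (-1/2))"
proof -
  have "(\<lambda>x::real. x powr (-1/2)) integrable_on {0..1}"
    by (rule integrable_on_powr_from_0) auto
  then have "(\<lambda>x::real. x powr (-1/2)) absolutely_integrable_on {0..1}"
    by (rule nonnegative_absolutely_integrable_1) auto
  then show ?thesis
    by (simp add: set_integrable_def integrable_completion[symmetric])
qed

lemma std_normal_density_mult_abs_ln_abs_le:
  fixes x :: real
  shows "std_normal_density x * \<bar>ln \<bar>x\<bar>\<bar>
           \<le> 2 * (indicator {0..1} x * x powr (-1/2) + indicator {0..1} (-x) * (-x) powr (-1/2))
             + std_normal_density x * \<bar>x\<bar>"
    (is "_ \<le> 2 * ?h + _")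
proof -
  have dens: "0 \<le> std_normal_density x" "std_normal_density x \<le> 1"
    by (simp_all add: std_normal_density_le_1)
  have "0 \<le> ?h" by simp
  consider "x = 0" | "x \<noteq> 0" "\<bar>x\<bar> \<le> 1" | "1 < \<bar>x\<bar>" by linarith
  then show ?thesis
  proof cases
    case 1
    then show ?thesis by simp
  next
    case 2
    then have "?h = \<bar>x\<bar> powr (-1/2)"
      by (auto simp: indicator_def)
    moreover have "std_normal_density x * \<bar>ln \<bar>x\<bar>\<bar> \<le> - ln \<bar>x\<bar>"
    proof -
      have "ln \<bar>x\<bar> \<le> 0" using 2 by simp
      then show ?thesis
        using mult_right_mono_neg[OF dens(2), of "ln \<bar>x\<bar>"] dens(1) by (simp add: abs_mult)
    qed
    moreover have "- ln \<bar>x\<bar> \<le> 2 * \<bar>x\<bar> powr (-1/2)"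
      using 2 by (intro neg_ln_le_two_powr) simp
    ultimately show ?thesis
      using dens by (simp add: add_increasing2)
  next
    case 3
    then have "\<bar>ln \<bar>x\<bar>\<bar> \<le> \<bar>x\<bar>"
      using ln_le_minus_one[of "\<bar>x\<bar>"] by (cases "x = 0") auto
    then show ?thesis
      using \<open>0 \<le> ?h\<close> dens by (simp add: mult_left_mono add_increasing)
  qed
qed

lemma integrable_ln_abs_std_normal: "integrable std_normal_distribution (\<lambda>x. ln \<bar>x\<bar>)"
proof -
  let ?h = "\<lambda>x::real. indicator {0..1} x * x powr (-1/2)"
  have "integrable lborel (\<lambda>x. ?h (0 + (-1) * x))"
    using integrable_powr_neg_half_unit_interval by (subst lborel_integrable_real_affine_iff) auto
  then have "integrable lborel (\<lambda>x. 2 * (?h x + ?h (-x)) + std_normal_density x * \<bar>x\<bar>)"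
    using integrable_powr_neg_half_unit_interval integrable_std_normal_moment_abs[of 1]
    by (intro Bochner_Integration.integrable_add Bochner_Integration.integrable_mult_right) auto
  then have "integrable lborel (\<lambda>x. std_normal_density x * ln \<bar>x\<bar>)"
    by (rule Bochner_Integration.integrable_bound)
       (auto simp: abs_mult intro!: AE_I2 order_trans[OF std_normal_density_mult_abs_ln_abs_le])
  then show ?thesis
    by (subst integrable_density) auto
qed

lemma (in prob_space) distributed_normal_of_char:
  assumes Z[measurable]: "Z \<in> borel_measurable M" and "0 < \<sigma>"
    and char_Z: "\<And>s. (\<integral>\<omega>. cis (s * Z \<omega>) \<partial>M) = complex_of_real (exp (- (s * \<sigma>)\<^sup>2 / 2))"
  shows "distributed M lborel Z (normal_density 0 \<sigma>)"
proof -
  let ?W = "\<lambda>\<omega>. Z \<omega> / \<sigma>"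
  have "char (distr M borel ?W) t = char std_normal_distribution t" for t
  proof -
    have "char (distr M borel ?W) t = (\<integral>\<omega>. cis ((t / \<sigma>) * Z \<omega>) \<partial>M)"
      by (simp add: char_def integral_distr cis_conv_exp)
    also have "\<dots> = complex_of_real (exp (- (t / \<sigma> * \<sigma>)\<^sup>2 / 2))"
      by (rule char_Z)
    finally show ?thesis
      using \<open>0 < \<sigma>\<close> by (simp add: char_std_normal_distribution)
  qed
  then have "distr M borel ?W = std_normal_distribution"
    by (intro Levy_uniqueness real_distribution_distr real_dist_normal_dist ext) simp_all
  moreover have "distr M lborel ?W = distr M borel ?W"
    by (rule distr_cong) simp_all
  ultimately have "distributed M lborel ?W std_normal_density"
    by (simp add: distributed_def)
  with \<open>0 < \<sigma>\<close> show ?thesis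
    using normal_standard_normal_convert[of \<sigma> Z 0] by simp
qed

definition mean_ln_abs_std_normal :: real where
  "mean_ln_abs_std_normal = (\<integral>x. ln \<bar>x\<bar> \<partial>std_normal_distribution)"

lemma (in prob_space) normal_distributed_ln_abs:
  assumes Z: "distributed M lborel Z (normal_density 0 \<sigma>)" and "0 < \<sigma>"
  shows "integrable M (\<lambda>\<omega>. ln \<bar>Z \<omega>\<bar>)"
    and "(\<integral>\<omega>. ln \<bar>Z \<omega>\<bar> \<partial>M) = ln \<sigma> + mean_ln_abs_std_normal"
proof -
  interpret std: prob_space std_normal_distribution
    by (rule prob_space_normal_density) simp
  let ?W = "\<lambda>\<omega>. Z \<omega> / \<sigma>"
  have "distributed M lborel ?W std_normal_density"
    using Z \<open>0 < \<sigma>\<close> normal_standard_normal_convert[of \<sigma> Z 0] by simp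
  moreover have "distr M lborel ?W = distr M borel ?W"
    by (rule distr_cong) simp_all
  ultimately have W[measurable]: "?W \<in> borel_measurable M"
    and law_W: "distr M borel ?W = std_normal_distribution"
    by (auto simp: distributed_def)
  have ln_Z: "ln \<bar>Z \<omega>\<bar> = ln \<bar>\<sigma> * ?W \<omega>\<bar>" for \<omega>
    using \<open>0 < \<sigma>\<close> by simp
  have "AE x in lborel. (x::real) \<noteq> 0"
    by (rule AE_lborel_singleton)
  then have "AE x in std_normal_distribution. x \<noteq> 0"
    by (subst AE_density) (auto elim: AE_mp)
  then have split_ln: "AE x in std_normal_distribution. ln \<bar>\<sigma> * x\<bar> = ln \<sigma> + ln \<bar>x\<bar>"
    by eventually_elim (use \<open>0 < \<sigma>\<close> in \<open>simp add: abs_mult ln_mult\<close>)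
  have "integrable std_normal_distribution (\<lambda>x. ln \<sigma> + ln \<bar>x\<bar>)"
    using integrable_ln_abs_std_normal by simp
  then have "integrable std_normal_distribution (\<lambda>x. ln \<bar>\<sigma> * x\<bar>)"
    using split_ln by (subst integrable_cong_AE) auto
  then show "integrable M (\<lambda>\<omega>. ln \<bar>Z \<omega>\<bar>)"
    unfolding ln_Z law_W[symmetric] by (subst (asm) integrable_distr_eq) auto
  have "(\<integral>\<omega>. ln \<bar>Z \<omega>\<bar> \<partial>M) = (\<integral>x. ln \<bar>\<sigma> * x\<bar> \<partial>std_normal_distribution)"
    unfolding ln_Z law_W[symmetric] by (simp add: integral_distr)
  also have "\<dots> = (\<integral>x. ln \<sigma> + ln \<bar>x\<bar> \<partial>std_normal_distribution)"
    using split_ln by (intro integral_cong_AE) auto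
  also have "\<dots> = ln \<sigma> + (\<integral>x. ln \<bar>x\<bar> \<partial>std_normal_distribution)"
    using integrable_ln_abs_std_normal std.prob_space by simp
  finally show "(\<integral>\<omega>. ln \<bar>Z \<omega>\<bar> \<partial>M) = ln \<sigma> + mean_ln_abs_std_normal"
    unfolding mean_ln_abs_std_normal_def .
qed

lemma (in prob_space) centered_gaussian_vector_distributed_linear:
  assumes V: "centered_gaussian_vector M d V \<Sigma>"
    and q_pos: "0 < (\<Sum>i=1..d. \<Sum>k=1..d. t i * \<Sigma> i k * t k)"
  shows "distributed M lborel (\<lambda>\<omega>. \<Sum>i=1..d. t i * V i \<omega>)
           (normal_density 0 (sqrt (\<Sum>i=1..d. \<Sum>k=1..d. t i * \<Sigma> i k * t k)))"
proof (rule distributed_normal_of_char)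
  let ?q = "\<Sum>i=1..d. \<Sum>k=1..d. t i * \<Sigma> i k * t k"
  show "(\<lambda>\<omega>. \<Sum>i=1..d. t i * V i \<omega>) \<in> borel_measurable M"
    using V unfolding centered_gaussian_vector_def
    by (intro borel_measurable_sum borel_measurable_times borel_measurable_const) auto
  show "0 < sqrt ?q"
    using q_pos by simp
  fix s :: real
  have "\<forall>u. (\<integral>\<omega>. cis (\<Sum>i=1..d. u i * V i \<omega>) \<partial>M)
          = complex_of_real (exp (- (1/2) * (\<Sum>i=1..d. \<Sum>k=1..d. u i * \<Sigma> i k * u k)))"
    using V unfolding centered_gaussian_vector_def by blast
  note this[rule_format, of "\<lambda>i. s * t i"]
  moreover have "(\<Sum>i=1..d. (s * t i) * V i \<omega>) = s * (\<Sum>i=1..d. t i * V i \<omega>)" for \<omega>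
    by (simp add: sum_distrib_left mult.assoc)
  moreover have "(\<Sum>i=1..d. \<Sum>k=1..d. (s * t i) * \<Sigma> i k * (s * t k)) = (s * sqrt ?q)\<^sup>2"
    using q_pos by (simp add: power_mult_distrib sum_distrib_left power2_eq_square mult_ac)
  ultimately show "(\<integral>\<omega>. cis (s * (\<Sum>i=1..d. t i * V i \<omega>)) \<partial>M)
          = complex_of_real (exp (- (s * sqrt ?q)\<^sup>2 / 2))"
    by simp
qed

lemma (in prob_space) centered_gaussian_vector_distributed_component:
  assumes V: "centered_gaussian_vector M d V \<Sigma>" and k: "k \<in> {1..d}" and "0 < \<Sigma> k k"
  shows "distributed M lborel (V k) (normal_density 0 (sqrt (\<Sigma> k k)))"
proof -
  let ?t = "\<lambda>i. of_bool (i = k) :: real"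
  have "(\<Sum>i=1..d. \<Sum>j=1..d. ?t i * \<Sigma> i j * ?t j) = \<Sigma> k k"
    using k by (simp add: of_bool_def if_distrib[where f = "\<lambda>x. x * _"]
        if_distrib[where f = "\<lambda>x. _ * x"] sum.delta cong: if_cong)
  moreover have "(\<lambda>\<omega>. \<Sum>i=1..d. ?t i * V i \<omega>) = V k"
    using k by (simp add: sum.delta Int_insert_left)
  ultimately show ?thesis
    using centered_gaussian_vector_distributed_linear[OF V, of ?t] \<open>0 < \<Sigma> k k\<close> by simp
qed

lemma (in prob_space) centered_gaussian_vector_distributed_sum:
  assumes V: "centered_gaussian_vector M d V \<Sigma>" and "0 < (\<Sum>i=1..d. \<Sum>k=1..d. \<Sigma> i k)"
  shows "distributed M lborel (\<lambda>\<omega>. \<Sum>i=1..d. V i \<omega>)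
           (normal_density 0 (sqrt (\<Sum>i=1..d. \<Sum>k=1..d. \<Sigma> i k)))"
  using centered_gaussian_vector_distributed_linear[OF V, of "\<lambda>_. 1"] assms(2) by simp

lemma sum_atLeast1_nat_group:
  fixes f :: "nat \<Rightarrow> 'b::comm_monoid_add"
  shows "(\<Sum>i=1..a*b. f i) = (\<Sum>p=1..a. \<Sum>k=1..b. f ((p - 1) * b + k))"
proof (induction a)
  case 0
  then show ?case by simp
next
  case (Suc a)
  have "(\<Sum>i=1..Suc a * b. f i) = (\<Sum>i=1..a*b + b. f i)"
    by (simp add: add.commute)
  also have "\<dots> = (\<Sum>i=1..a*b. f i) + (\<Sum>i=a*b+1..a*b + b. f i)"
    by (rule sum.ub_add_nat) simp
  also have "(\<Sum>i=a*b+1..a*b + b. f i) = (\<Sum>k=1..b. f (a * b + k))"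
    using sum.shift_bounds_cl_nat_ivl[of f 1 "a*b" b] by (simp add: add.commute)
  finally show ?case
    using Suc by simp
qed

locale gaussian_iid_blocks = prob_space +
  fixes d n :: nat and X :: "nat \<Rightarrow> 'a \<Rightarrow> real" and \<Sigma> :: "nat \<Rightarrow> nat \<Rightarrow> real"
  assumes indep_blocks: "indep_vars (\<lambda>_. Pi\<^sub>M {1..d} (\<lambda>_. borel))
                  (\<lambda>j \<omega>. \<lambda>i\<in>{1..d}. X ((j - 1) * d + i) \<omega>) {1..n}"
    and gaussian_blocks: "\<forall>j\<in>{1..n}. centered_gaussian_vector M d (\<lambda>i. X ((j - 1) * d + i)) \<Sigma>"
begin

definition block_sum :: "nat \<Rightarrow> 'a \<Rightarrow> real" where
  "block_sum j \<omega> = (\<Sum>k=1..d. X ((j - 1) * d + k) \<omega>)"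

lemma indep_block_sums: "indep_vars (\<lambda>_. borel) block_sum {1..n}"
proof -
  have "indep_vars (\<lambda>_. borel)
          (\<lambda>j \<omega>. (\<lambda>v. \<Sum>k=1..d. v k) (\<lambda>i\<in>{1..d}. X ((j - 1) * d + i) \<omega>)) {1..n}"
    by (rule indep_vars_compose2[OF indep_blocks]) measurable
  then show ?thesis
    by (simp add: block_sum_def[abs_def])
qed

lemma distributed_block_sum:
  assumes "j \<in> {1..n}" and "0 < (\<Sum>i=1..d. \<Sum>k=1..d. \<Sigma> i k)"
  shows "distributed M lborel (block_sum j) (normal_density 0 (sqrt (\<Sum>i=1..d. \<Sum>k=1..d. \<Sigma> i k)))"
  using centered_gaussian_vector_distributed_sum[OF gaussian_blocks[rule_format, OF assms(1)] assms(2)]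
  by (simp add: block_sum_def[abs_def])

lemma distributed_sum_consecutive_blocks:
  assumes "1 \<le> m" and "a + m \<le> n" and S_pos: "0 < (\<Sum>i=1..d. \<Sum>k=1..d. \<Sigma> i k)"
  shows "distributed M lborel (\<lambda>\<omega>. \<Sum>j=1..m*d. X (j + a * d) \<omega>)
           (normal_density 0 (sqrt (m * (\<Sum>i=1..d. \<Sum>k=1..d. \<Sigma> i k))))"
proof -
  let ?S = "\<Sum>i=1..d. \<Sum>k=1..d. \<Sigma> i k"
  let ?I = "{1 + a..m + a}"
  have "(\<Sum>j=1..m*d. X (j + a * d) \<omega>) = (\<Sum>b\<in>?I. block_sum b \<omega>)" for \<omega>
  proof -
    have "(\<Sum>j=1..m*d. X (j + a * d) \<omega>) = (\<Sum>p=1..m. \<Sum>k=1..d. X ((p - 1) * d + k + a * d) \<omega>)"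
      by (rule sum_atLeast1_nat_group)
    also have "\<dots> = (\<Sum>p=1..m. block_sum (p + a) \<omega>)"
      unfolding block_sum_def
    proof (intro sum.cong refl)
      fix p k
      assume "p \<in> {1..m}"
      then show "X ((p - 1) * d + k + a * d) \<omega> = X ((p + a - 1) * d + k) \<omega>"
        by (cases p) (simp_all add: algebra_simps)
    qed
    finally show ?thesis
      using sum.shift_bounds_cl_nat_ivl[of "\<lambda>b. block_sum b \<omega>" 1 a m] by simp
  qed
  moreover have "distributed M lborel (\<lambda>\<omega>. \<Sum>b\<in>?I. block_sum b \<omega>)
                   (normal_density (\<Sum>b\<in>?I. 0) (sqrt (\<Sum>b\<in>?I. (sqrt ?S)\<^sup>2)))"
    using assms indep_vars_subset[OF indep_block_sums] distributed_block_sum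
    by (intro sum_indep_normal) auto
  ultimately show ?thesis
    using S_pos \<open>1 \<le> m\<close> by simp
qed

lemma
  assumes diag_pos: "\<forall>k\<in>{1..d}. 0 < \<Sigma> k k"
  shows integrable_sum_ln_abs_components: "integrable M (\<lambda>\<omega>. \<Sum>i=1..n*d. ln \<bar>X i \<omega>\<bar>)"
    and integral_sum_ln_abs_components:
      "(\<integral>\<omega>. (\<Sum>i=1..n*d. ln \<bar>X i \<omega>\<bar>) \<partial>M)
         = real n * (\<Sum>k=1..d. ln (\<Sigma> k k) / 2 + mean_ln_abs_std_normal)"
proof -
  have component: "integrable M (\<lambda>\<omega>. ln \<bar>X ((j - 1) * d + k) \<omega>\<bar>) \<and>
      (\<integral>\<omega>. ln \<bar>X ((j - 1) * d + k) \<omega>\<bar> \<partial>M) = ln (\<Sigma> k k) / 2 + mean_ln_abs_std_normal"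
    if j: "j \<in> {1..n}" and k: "k \<in> {1..d}" for j k
  proof -
    have "0 < \<Sigma> k k"
      using diag_pos k by blast
    moreover from this have "distributed M lborel (X ((j - 1) * d + k)) (normal_density 0 (sqrt (\<Sigma> k k)))"
      using centered_gaussian_vector_distributed_component gaussian_blocks j k by blast
    ultimately show ?thesis
      using normal_distributed_ln_abs by (simp add: ln_sqrt)
  qed
  have regroup: "(\<lambda>\<omega>. \<Sum>i=1..n*d. ln \<bar>X i \<omega>\<bar>) = (\<lambda>\<omega>. \<Sum>j=1..n. \<Sum>k=1..d. ln \<bar>X ((j - 1) * d + k) \<omega>\<bar>)"
    by (intro ext) (rule sum_atLeast1_nat_group)
  show "integrable M (\<lambda>\<omega>. \<Sum>i=1..n*d. ln \<bar>X i \<omega>\<bar>)"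
    unfolding regroup using component by (intro Bochner_Integration.integrable_sum) auto
  have "(\<integral>\<omega>. (\<Sum>i=1..n*d. ln \<bar>X i \<omega>\<bar>) \<partial>M)
          = (\<Sum>j=1..n. \<integral>\<omega>. (\<Sum>k=1..d. ln \<bar>X ((j - 1) * d + k) \<omega>\<bar>) \<partial>M)"
    unfolding regroup using component
    by (intro Bochner_Integration.integral_sum Bochner_Integration.integrable_sum) auto
  also have "\<dots> = (\<Sum>j=1..n. \<Sum>k=1..d. \<integral>\<omega>. ln \<bar>X ((j - 1) * d + k) \<omega>\<bar> \<partial>M)"
    using component by (intro sum.cong refl Bochner_Integration.integral_sum) auto
  also have "\<dots> = (\<Sum>j=1..n. \<Sum>k=1..d. ln (\<Sigma> k k) / 2 + mean_ln_abs_std_normal)"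
    using component by simp
  finally show "(\<integral>\<omega>. (\<Sum>i=1..n*d. ln \<bar>X i \<omega>\<bar>) \<partial>M)
      = real n * (\<Sum>k=1..d. ln (\<Sigma> k k) / 2 + mean_ln_abs_std_normal)"
    by simp
qed

lemma
  assumes "1 \<le> m" and "m * g \<le> n" and S_pos: "0 < (\<Sum>i=1..d. \<Sum>k=1..d. \<Sigma> i k)"
  shows integrable_sum_ln_abs_block_groups:
      "integrable M (\<lambda>\<omega>. \<Sum>i=1..g. ln \<bar>\<Sum>j=1..d*m. X (j + (i - 1) * (d * m)) \<omega>\<bar>)"
    and integral_sum_ln_abs_block_groups:
      "(\<integral>\<omega>. (\<Sum>i=1..g. ln \<bar>\<Sum>j=1..d*m. X (j + (i - 1) * (d * m)) \<omega>\<bar>) \<partial>M)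
         = real g * (ln (m * (\<Sum>i=1..d. \<Sum>k=1..d. \<Sigma> i k)) / 2 + mean_ln_abs_std_normal)"
proof -
  let ?S = "\<Sum>i=1..d. \<Sum>k=1..d. \<Sigma> i k"
  have group: "integrable M (\<lambda>\<omega>. ln \<bar>\<Sum>j=1..d*m. X (j + (i - 1) * (d * m)) \<omega>\<bar>) \<and>
      (\<integral>\<omega>. ln \<bar>\<Sum>j=1..d*m. X (j + (i - 1) * (d * m)) \<omega>\<bar> \<partial>M) = ln (m * ?S) / 2 + mean_ln_abs_std_normal"
    if i: "i \<in> {1..g}" for i
  proof -
    have "(i - 1) * m + m = i * m"
      using i by (cases i) auto
    also have "\<dots> \<le> n"
      using i \<open>m * g \<le> n\<close> by (metis atLeastAtMost_iff mult.commute mult_le_mono2 order_trans)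
    finally have "distributed M lborel (\<lambda>\<omega>. \<Sum>j=1..m*d. X (j + (i - 1) * m * d) \<omega>) (normal_density 0 (sqrt (m * ?S)))"
      using distributed_sum_consecutive_blocks \<open>1 \<le> m\<close> S_pos by blast
    moreover have "0 < m * ?S"
      using \<open>1 \<le> m\<close> S_pos by simp
    ultimately show ?thesis
      using normal_distributed_ln_abs by (simp add: ln_sqrt mult_ac)
  qed
  show "integrable M (\<lambda>\<omega>. \<Sum>i=1..g. ln \<bar>\<Sum>j=1..d*m. X (j + (i - 1) * (d * m)) \<omega>\<bar>)"
    using group by (intro Bochner_Integration.integrable_sum) auto
  have "(\<integral>\<omega>. (\<Sum>i=1..g. ln \<bar>\<Sum>j=1..d*m. X (j + (i - 1) * (d * m)) \<omega>\<bar>) \<partial>M)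
          = (\<Sum>i=1..g. \<integral>\<omega>. ln \<bar>\<Sum>j=1..d*m. X (j + (i - 1) * (d * m)) \<omega>\<bar> \<partial>M)"
    using group by (intro Bochner_Integration.integral_sum) auto
  also have "\<dots> = (\<Sum>i=1..g. ln (m * ?S) / 2 + mean_ln_abs_std_normal)"
    using group by simp
  finally show "(\<integral>\<omega>. (\<Sum>i=1..g. ln \<bar>\<Sum>j=1..d*m. X (j + (i - 1) * (d * m)) \<omega>\<bar>) \<partial>M)
      = real g * (ln (m * ?S) / 2 + mean_ln_abs_std_normal)"
    by simp
qed

lemma
  assumes "n = m * g" and "1 \<le> m" and "1 \<le> g" and "1 \<le> d"
    and diag_pos: "\<forall>k\<in>{1..d}. 0 < \<Sigma> k k" and S_pos: "0 < (\<Sum>i=1..d. \<Sum>k=1..d. \<Sigma> i k)"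
  shows integrable_mean_ln_abs_gap:
      "integrable M (\<lambda>\<omega>. (1 / real g) * (\<Sum>i=1..g. ln \<bar>\<Sum>j=1..d*m. X (j + (i - 1) * (d * m)) \<omega>\<bar>)
                          - (1 / real (n * d)) * (\<Sum>i=1..n*d. ln \<bar>X i \<omega>\<bar>))"
      (is "integrable M ?gap")
    and integral_mean_ln_abs_gap:
      "(\<integral>\<omega>. (1 / real g) * (\<Sum>i=1..g. ln \<bar>\<Sum>j=1..d*m. X (j + (i - 1) * (d * m)) \<omega>\<bar>)
             - (1 / real (n * d)) * (\<Sum>i=1..n*d. ln \<bar>X i \<omega>\<bar>) \<partial>M)
         = (1/2) * (ln (real m) + ln (\<Sum>i=1..d. \<Sum>k=1..d. \<Sigma> i k)
                    - (1 / real d) * (\<Sum>i=1..d. ln (\<Sigma> i i)))"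
      (is "?mean = ?value")
proof -
  let ?S = "\<Sum>i=1..d. \<Sum>k=1..d. \<Sigma> i k" and ?c = mean_ln_abs_std_normal
  note groups = integrable_sum_ln_abs_block_groups integral_sum_ln_abs_block_groups
  note components = integrable_sum_ln_abs_components integral_sum_ln_abs_components
  show "integrable M ?gap"
    using groups components assms by auto
  have "?mean = (1 / real g) * (real g * (ln (m * ?S) / 2 + ?c))
        - (1 / real (n * d)) * (real n * (\<Sum>k=1..d. ln (\<Sigma> k k) / 2 + ?c))"
    using groups components assms by simp
  also have "(\<Sum>k=1..d. ln (\<Sigma> k k) / 2 + ?c) = (\<Sum>k=1..d. ln (\<Sigma> k k)) / 2 + real d * ?c"
    by (simp add: sum.distrib sum_divide_distrib)
  also have "(1 / real g) * (real g * (ln (m * ?S) / 2 + ?c))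
        - (1 / real (n * d)) * (real n * ((\<Sum>k=1..d. ln (\<Sigma> k k)) / 2 + real d * ?c)) = ?value"
    using assms by (simp add: ln_mult field_simps)
  finally show "?mean = ?value" .
qed

end

lemma equicorrelation_matrix_sums:
  fixes \<beta> :: real
  assumes \<Sigma>: "\<forall>i\<in>{1..d}. \<forall>k\<in>{1..d}. \<Sigma> i k = \<beta> + (if i = k then 1 - \<beta> else 0)"
  shows "(\<Sum>i=1..d. \<Sum>k=1..d. \<Sigma> i k) = \<beta> * real d ^ 2 + (1 - \<beta>) * real d"
    and "(\<Sum>i=1..d. ln (\<Sigma> i i)) = 0"
proof -
  have row: "(\<Sum>k=1..d. \<Sigma> i k) = real d * \<beta> + (1 - \<beta>)" if i: "i \<in> {1..d}" for i
  proof -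
    have "(\<Sum>k=1..d. \<Sigma> i k) = (\<Sum>k=1..d. \<beta> + (if i = k then 1 - \<beta> else 0))"
      using \<Sigma> i by (intro sum.cong) auto
    then show ?thesis
      using i by (simp add: sum.distrib sum.delta)
  qed
  have "(\<Sum>i=1..d. \<Sum>k=1..d. \<Sigma> i k) = (\<Sum>i=1..d. real d * \<beta> + (1 - \<beta>))"
    using row by (rule sum.cong[OF refl])
  then show "(\<Sum>i=1..d. \<Sum>k=1..d. \<Sigma> i k) = \<beta> * real d ^ 2 + (1 - \<beta>) * real d"
    by (simp add: power2_eq_square algebra_simps)
  show "(\<Sum>i=1..d. ln (\<Sigma> i i)) = 0"
    using \<Sigma> by (intro sum.neutral) auto
qed

lemma equicorrelation_exponent_image:
  assumes "2 \<le> D"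
  shows "(\<lambda>\<beta>::real. (1/2) * ln (\<beta> * real D ^ 2 + (1 - \<beta>) * real D) / ln (real D)) ` {0..1}
           = {1/2..1}"
proof -
  have D: "1 < real D" and "0 < ln (real D)" and gap: "0 < real D ^ 2 - real D"
    using assms by (simp_all add: power2_eq_square)
  have affine: "\<beta> * real D ^ 2 + (1 - \<beta>) * real D = real D + \<beta> * (real D ^ 2 - real D)" for \<beta>
    by (simp add: algebra_simps)
  show ?thesis
  proof (intro equalityI subsetI)
    fix y
    assume "y \<in> (\<lambda>\<beta>. (1/2) * ln (\<beta> * real D ^ 2 + (1 - \<beta>) * real D) / ln (real D)) ` {0..1}"
    then obtain \<beta> where \<beta>: "0 \<le> \<beta>" "\<beta> \<le> 1"
      and y: "y = ln (real D + \<beta> * (real D ^ 2 - real D)) / (2 * ln (real D))"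
      unfolding affine by auto
    have "0 \<le> \<beta> * (real D ^ 2 - real D)" and "\<beta> * (real D ^ 2 - real D) \<le> real D ^ 2 - real D"
      using \<beta> gap by (simp_all add: mult_left_le_one_le)
    then have "real D \<le> real D + \<beta> * (real D ^ 2 - real D)"
      and "real D + \<beta> * (real D ^ 2 - real D) \<le> real D ^ 2"
      by linarith+
    then have "ln (real D) \<le> ln (real D + \<beta> * (real D ^ 2 - real D))"
      and "ln (real D + \<beta> * (real D ^ 2 - real D)) \<le> ln (real D ^ 2)"
      using D by (subst ln_le_cancel_iff; simp)+
    moreover have "ln (real D ^ 2) = 2 * ln (real D)"
      using D by (simp add: ln_realpow)
    ultimately show "y \<in> {1/2..1}"
      using \<open>0 < ln (real D)\<close> by (simp add: y field_simps)
  next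
    fix y :: real
    assume "y \<in> {1/2..1}"
    define p where "p = real D powr (2 * y)"
    have "real D \<le> p" and "p \<le> real D ^ 2"
      using \<open>y \<in> {1/2..1}\<close> D powr_mono[of 1 "2 * y" "real D"] powr_mono[of "2 * y" 2 "real D"]
      by (simp_all add: p_def powr_realpow)
    define \<beta> where "\<beta> = (p - real D) / (real D ^ 2 - real D)"
    have "\<beta> \<in> {0..1}"
      using \<open>real D \<le> p\<close> \<open>p \<le> real D ^ 2\<close> gap by (simp add: \<beta>_def field_simps)
    moreover have "real D + \<beta> * (real D ^ 2 - real D) = p"
      using gap by (simp add: \<beta>_def)
    then have "y = (1/2) * ln (\<beta> * real D ^ 2 + (1 - \<beta>) * real D) / ln (real D)"
      using D \<open>0 < ln (real D)\<close> by (simp add: affine p_def ln_powr)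
    ultimately show "y \<in> (\<lambda>\<beta>. (1/2) * ln (\<beta> * real D ^ 2 + (1 - \<beta>) * real D) / ln (real D)) ` {0..1}"
      by blast
  qed
qed

theorem theorem6:
  fixes M :: "'a measure" and X :: "nat \<Rightarrow> 'a \<Rightarrow> real"
    and d m K1 K2 K :: nat and \<Sigma> :: "nat \<Rightarrow> nat \<Rightarrow> real"
  assumes "prob_space M"
    and pos: "d \<ge> 1" "m \<ge> 1" "K2 \<ge> 1"
    and K1_def: "K1 = d * m" and K_def: "K = K1 * K2"
    and cov: "covariance_matrix d \<Sigma>"
    and diag_pos: "\<forall>i\<in>{1..d}. \<Sigma> i i > 0"
    and sum_pos: "(\<Sum>i=1..d. \<Sum>k=1..d. \<Sigma> i k) > 0"
    and indep: "prob_space.indep_vars M (\<lambda>_. Pi\<^sub>M {1..d} (\<lambda>_. borel))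
                  (\<lambda>j \<omega>. \<lambda>i\<in>{1..d}. X ((j - 1) * d + i) \<omega>) {1..m * K2}"
    and gauss: "\<forall>j\<in>{1..m * K2}.
                  centered_gaussian_vector M d (\<lambda>i. X ((j - 1) * d + i)) \<Sigma>"
  defines "Y \<equiv> (\<lambda>i \<omega>. \<Sum>j=1..K1. X (j + (i - 1) * K1) \<omega>)"
  defines "F \<equiv> (\<lambda>\<omega>. (1 / ln (real K1)) *
                 ((1 / real K2) * (\<Sum>i=1..K2. ln \<bar>Y i \<omega>\<bar>)
                  - (1 / real K) * (\<Sum>i=1..K. ln \<bar>X i \<omega>\<bar>)))"
  shows "integrable M F \<and>
         (\<integral>\<omega>. F \<omega> \<partial>M) =
           (1/2) * (ln (real m) + ln (\<Sum>i=1..d. \<Sum>k=1..d. \<Sigma> i k)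
                    - (1 / real d) * (\<Sum>i=1..d. ln (\<Sigma> i i)))
                 / (ln (real m) + ln (real d)) \<and>
         (\<forall>\<beta>::real. (d = K1 \<and> d \<ge> 2 \<and> m = 1 \<and> 0 \<le> \<beta> \<and> \<beta> \<le> 1 \<and>
            (\<forall>i\<in>{1..d}. \<forall>k\<in>{1..d}. \<Sigma> i k = \<beta> + (if i = k then 1 - \<beta> else 0)))
          \<longrightarrow> (\<integral>\<omega>. F \<omega> \<partial>M) =
                (1/2) * ln (\<beta> * real d ^ 2 + (1 - \<beta>) * real d) / ln (real d)) \<and>
         (\<forall>D::nat. D \<ge> 2 \<longrightarrow>
            (\<lambda>\<beta>::real. (1/2) * ln (\<beta> * real D ^ 2 + (1 - \<beta>) * real D) / ln (real D)) ` {0..1}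
              = {1/2..1})"
proof -
  interpret gaussian_iid_blocks M d "m * K2" X \<Sigma>
    by (intro gaussian_iid_blocks.intro gaussian_iid_blocks_axioms.intro assms(1) indep gauss)
  let ?G = "\<lambda>\<omega>. (1 / real K2) * (\<Sum>i=1..K2. ln \<bar>Y i \<omega>\<bar>) - (1 / real K) * (\<Sum>i=1..K. ln \<bar>X i \<omega>\<bar>)"
  have K: "K = m * K2 * d"
    by (simp add: K_def K1_def)
  have G: "integrable M ?G"
    "(\<integral>\<omega>. ?G \<omega> \<partial>M) = (1/2) * (ln (real m) + ln (\<Sum>i=1..d. \<Sum>k=1..d. \<Sigma> i k)
                                       - (1 / real d) * (\<Sum>i=1..d. ln (\<Sigma> i i)))"
    unfolding Y_def K1_def K
    using integrable_mean_ln_abs_gap integral_mean_ln_abs_gap pos diag_pos sum_pos by auto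
  have "ln (real K1) = ln (real m) + ln (real d)"
    using pos by (simp add: K1_def ln_mult)
  then have F: "F = (\<lambda>\<omega>. ?G \<omega> / (ln (real m) + ln (real d)))"
    by (simp add: F_def)
  have int_F: "integrable M F"
    unfolding F using G(1) by (rule integrable_divide_zero)
  have mean_F: "(\<integral>\<omega>. F \<omega> \<partial>M) =
           (1/2) * (ln (real m) + ln (\<Sum>i=1..d. \<Sum>k=1..d. \<Sigma> i k)
                    - (1 / real d) * (\<Sum>i=1..d. ln (\<Sigma> i i)))
                 / (ln (real m) + ln (real d))"
    unfolding F integral_divide_zero G(2) ..
  show ?thesis
    using int_F mean_F equicorrelation_matrix_sums equicorrelation_exponent_image by auto
qed

end
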